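(* Let $n\ge 1$. (a) For every goal pattern $G$ (a multiset of $n$ points of $\mathbb R^2$) there is an algorithm of size $n$ that solves the pattern formation problem for $G$ under the SSYNC scheduler. (b) For $n\ge3$, if $G$ is the set of vertices of a regular $n$-gon, then no algorithm of size less than $n$ solves the pattern formation problem for $G$. Hence the MAS of the pattern formation problem is $n$.
   Context: Model. A swarm consists of $n\ge1$ robots $r_1,\dots,r_n$, modeled as points in $\mathbb R^2$. Each robot $r_i$ has a local right-handed $x$-$y$ coordinate system $Z_i$ whose origin is always the robot's current position, with arbitrary (adversarially chosen, fixed) unit length and axis orientation; robots do not share coordinate systems. The configuration at time $t$ is the multiset $P_t$ of the $n$ robot positions (robots can detect multiplicities). A target function $\phi$ maps each finite multiset $P$ of points of $\mathbb R^2$ with $(0,0)\in P$ to a point $\phi(P)\in\mathbb R^2$. Time is discrete, $t=0,1,2,\dots$. Under the semi-synchronous (SSYNC) scheduler, at each time $t$ an adversary chooses a set of robots to activate; each activated robot $r_i$ observes $P_t$ expressed in $Z_i$, evaluates its target function on this multiset, and moves to the resulting point (interpreted in $Z_i$), arriving before time $t+1$; non-activated robots do not move. Schedules are fair: every robot is activated infinitely often. An algorithm of size $m$ is a set $\Phi$ of $m$ distinct target functions ($m\le n$); an assignment is a surjection $\mathcal A$ from the robots onto $\Phi$, robot $r_i$ using $\mathcal A(r_i)$. $\Phi$ solves a problem if for every assignment, every choice of local coordinate systems, every initial configuration and every fair SSYNC schedule, the resulting execution solves the problem. The MAS of a problem is the least $m$ such that some algorithm of size $m$ solves it, and $\infty$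 if no algorithm of any size $m\le n$ solves it. Problem. Two multisets are similar if one is obtained from the other by a composition of a positive scaling, a translation and a rotation (no reflection). The pattern formation problem for a goal pattern $G$: starting from any initial configuration, reach a configuration similar to $G$. *)

theory Defs
  imports Complex_Main "HOL-Library.Multiset"
begin

text \<open>Points of the plane are complex numbers. A target function maps a multiset of
points (observed in local coordinates, containing the origin) to a point.\<close>

type_synonym target_fun = "complex multiset \<Rightarrow> complex"

definition config :: "nat \<Rightarrow> (nat \<Rightarrow> complex) \<Rightarrow> complex multiset" where
  "config n p = mset (map p [0..<n])"

text \<open>Local coordinate system of robot i: origin at its current position, and a fixed
right-handed frame given by a nonzero complex number c i (rotation + positive scaling):
local point z corresponds to global point  p i + c i * z.\<close>

definition observe :: "nat \<Rightarrow> (nat \<Rightarrow> complex) \<Rightarrow> complex \<Rightarrow> nat \<Rightarrow> complex multiset" where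
  "observe n p ci i = image_mset (\<lambda>q. (q - p i) / ci) (config n p)"

text \<open>SSYNC execution: A = assignment, c = local frames, p0 = initial positions,
S t = set of robots activated at time t.\<close>

fun exec :: "nat \<Rightarrow> (nat \<Rightarrow> target_fun) \<Rightarrow> (nat \<Rightarrow> complex) \<Rightarrow> (nat \<Rightarrow> complex)
    \<Rightarrow> (nat \<Rightarrow> nat set) \<Rightarrow> nat \<Rightarrow> (nat \<Rightarrow> complex)" where
  "exec n A c p0 S 0 = p0"
| "exec n A c p0 S (Suc t) =
     (let p = exec n A c p0 S t in
      (\<lambda>i. if i \<in> S t then p i + c i * A i (observe n p (c i) i) else p i))"

definition fair :: "nat \<Rightarrow> (nat \<Rightarrow> nat set) \<Rightarrow> bool" where
  "fair n S \<longleftrightarrow> (\<forall>t. S t \<subseteq> {..<n}) \<and> (\<forall>i<n. \<forall>t. \<exists>t'\<ge>t. i \<in> S t')"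

definition similar :: "complex multiset \<Rightarrow> complex multiset \<Rightarrow> bool" where
  "similar P Q \<longleftrightarrow> (\<exists>a b. a \<noteq> 0 \<and> P = image_mset (\<lambda>z. a * z + b) Q)"

definition algorithm :: "nat \<Rightarrow> target_fun set \<Rightarrow> bool" where
  "algorithm n Phi \<longleftrightarrow> finite Phi \<and> Phi \<noteq> {} \<and> card Phi \<le> n"

definition assignment :: "nat \<Rightarrow> target_fun set \<Rightarrow> (nat \<Rightarrow> target_fun) \<Rightarrow> bool" where
  "assignment n Phi A \<longleftrightarrow> A ` {..<n} = Phi"

definition solves_pf :: "nat \<Rightarrow> complex multiset \<Rightarrow> target_fun set \<Rightarrow> bool" where
  "solves_pf n G Phi \<longleftrightarrow>
     (\<forall>A c p0 S. assignment n Phi A \<longrightarrow> (\<forall>i<n. c i \<noteq> 0) \<longrightarrow> fair n S \<longrightarrow>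
        (\<exists>t. similar (config n (exec n A c p0 S t)) G))"

definition regular_polygon :: "nat \<Rightarrow> complex multiset" where
  "regular_polygon n = mset (map (\<lambda>k. cis (2 * pi * real k / real n)) [0..<n])"

definition is_regular_ngon :: "nat \<Rightarrow> complex multiset \<Rightarrow> bool" where
  "is_regular_ngon n G \<longleftrightarrow> (\<exists>a b. a \<noteq> 0 \<and> G = image_mset (\<lambda>z. a * z + b) (regular_polygon n))"

end

theory Submission
  imports Defs
begin

text \<open>Part (a): with n distinct target functions every robot knows its own index j, so the
  goal can be built point by point. Enumerate the goal from a point of maximal multiplicity.
  Once the configuration has a unique point of maximal multiplicity, the anchor, it keeps it:
  robots that do not belong off the anchor return to it, and when the first k goal points are
  in place (scaled about the anchor), robot k + 1 moves to its own. Ties are broken by robot 1.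
  The rule only refers to the anchor and to similarity-invariant data, so it can be evaluated
  in any local frame. A potential with weights 4 ^ j drops at every change of configuration,
  hence by fairness the goal is formed.

  Part (b): with fewer functions than robots two robots share a function; in identical frames,
  from identical positions and always activated together they are never separated, while a
  regular n-gon has no multiple points.\<close>


lemma exec_cong_robot:
  assumes "A i = A k" "c i = c k" "p0 i = p0 k" "\<forall>t. i \<in> S t \<longleftrightarrow> k \<in> S t"
  shows "exec n A c p0 S t i = exec n A c p0 S t k"
  using assms by (induction t) (auto simp: Let_def observe_def)

lemma count_mset_map_upt: "count (mset (map f [0..<n])) b = card {i. i < n \<and> f i = b}"
proof (induction n)
  case (Suc n)
  have "{i. i < Suc n \<and> f i = b} = {i. i < n \<and> f i = b} \<union> (if f n = b then {n} else {})"
    by (auto simp: less_Suc_eq)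
  then have "card {i. i < Suc n \<and> f i = b} = card {i. i < n \<and> f i = b} + (if f n = b then 1 else 0)"
    by (auto simp: card_insert_if)
  with Suc show ?case by simp
qed simp

lemma mset_map_upt_fun_upd:
  assumes "r < n"
  shows "mset (map (f(r := y)) [0..<n]) = mset (map f [0..<n]) - {#f r#} + {#y#}"
proof -
  have "[0..<n] = [0..<r] @ r # [Suc r..<n]"
    using assms upt_add_eq_append[of 0 r "n - r"] by (simp add: upt_conv_Cons)
  then show ?thesis by (subst (1 2) \<open>[0..<n] = _\<close>) simp
qed

lemma count_image_mset_inj:
  assumes "inj f"
  shows "count (image_mset f P) (f b) = count P b"
proof -
  have "f -` {f b} = {b}" using assms by (auto dest: injD)
  then show ?thesis by (cases "b \<in># P") (auto simp: count_image_mset not_in_iff)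
qed

lemma count_config: "count (config n p) b = card {i. i < n \<and> p i = b}"
  unfolding config_def by (rule count_mset_map_upt)

lemma config_cong: "(\<And>i. i < n \<Longrightarrow> p i = q i) \<Longrightarrow> config n p = config n q"
  unfolding config_def by (intro arg_cong[where f=mset] map_cong) auto

lemma config_fun_upd: "r < n \<Longrightarrow> config n (p(r := y)) = config n p - {#p r#} + {#y#}"
  unfolding config_def by (rule mset_map_upt_fun_upd)

section \<open>Robots sharing a target function\<close>

lemma count_config_ge_2:
  assumes "i < n" "k < n" "i \<noteq> k" "p i = p k"
  shows "2 \<le> count (config n p) (p i)"
proof -
  have "{i, k} \<subseteq> {j. j < n \<and> p j = p i}" using assms by auto
  then have "card {i, k} \<le> card {j. j < n \<and> p j = p i}" by (intro card_mono) auto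
  then show ?thesis using assms(3) by (simp add: count_config)
qed

lemma count_regular_ngon_le_1:
  assumes "is_regular_ngon n G" "0 < n"
  shows "count G y \<le> 1"
proof -
  obtain a b where ab: "a \<noteq> 0" "G = image_mset (\<lambda>z. a * z + b) (regular_polygon n)"
    using assms(1) by (auto simp: is_regular_ngon_def)
  have "inj_on (\<lambda>k. cis (2 * pi * real k / real n)) {..<n}"
    using bij_betw_roots_unity[OF assms(2)] by (simp add: bij_betw_def)
  moreover have "inj (\<lambda>z. a * z + b)" using ab(1) by (auto simp: inj_def)
  ultimately have "distinct (map ((\<lambda>z. a * z + b) \<circ> (\<lambda>k. cis (2 * pi * real k / real n))) [0..<n])"
    by (simp add: distinct_map lessThan_atLeast0 comp_inj_on inj_on_subset)
  then show ?thesis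
    using ab(2) by (simp add: regular_polygon_def distinct_count_atmost_1 flip: mset_map)
qed

lemma is_regular_ngon_similar:
  assumes "similar P G" "is_regular_ngon n G"
  shows "is_regular_ngon n P"
proof -
  obtain a b where "a \<noteq> 0" "G = image_mset (\<lambda>z. a * z + b) (regular_polygon n)"
    using assms(2) by (auto simp: is_regular_ngon_def)
  moreover obtain a' b' where "a' \<noteq> 0" "P = image_mset (\<lambda>z. a' * z + b') G"
    using assms(1) by (auto simp: similar_def)
  ultimately have "a' * a \<noteq> 0"
    "P = image_mset (\<lambda>z. (a' * a) * z + (a' * b + b')) (regular_polygon n)"
    by (simp_all add: image_mset.compositionality o_def algebra_simps)
  then show ?thesis unfolding is_regular_ngon_def by blast
qed

lemma assignment_sharing_function:
  assumes "finite Phi" "Phi \<noteq> {}" "card Phi < n"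
  obtains A k where "assignment n Phi A" "0 < k" "k < n" "A k = A 0"
proof -
  obtain ps where ps: "set ps = Phi" "distinct ps" using finite_distinct_list[OF assms(1)] by blast
  define k where "k = length ps"
  have "0 < k" "k < n"
    using ps assms distinct_card[of ps] by (auto simp: k_def)
  define A where "A i = (if i < k then ps ! i else ps ! 0)" for i
  have "A ` {..<n} = set ps"
  proof
    show "A ` {..<n} \<subseteq> set ps" using \<open>0 < k\<close> by (auto simp: A_def k_def)
    show "set ps \<subseteq> A ` {..<n}"
      using \<open>k < n\<close> by (force simp: A_def k_def in_set_conv_nth)
  qed
  then show ?thesis
    using that[of A k] \<open>0 < k\<close> \<open>k < n\<close> ps(1) by (simp add: assignment_def A_def)
qed

theorem regular_ngon_unsolvable:
  assumes "3 \<le> n" "is_regular_ngon n G" "algorithm n Phi" "card Phi < n"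
  shows "\<not> solves_pf n G Phi"
proof
  assume sol: "solves_pf n G Phi"
  have "finite Phi" "Phi \<noteq> {}" using assms(3) by (auto simp: algorithm_def)
  then obtain A k where A: "assignment n Phi A" "0 < k" "k < n" "A k = A 0"
    using assignment_sharing_function assms(4) by blast
  define p where "p = exec n A (\<lambda>_. 1) (\<lambda>_. 0) (\<lambda>_. {..<n})"
  have "fair n (\<lambda>_. {..<n})" by (auto simp: fair_def)
  then obtain t where "similar (config n (p t)) G"
    using sol A(1) by (fastforce simp: solves_pf_def p_def)
  then have "count (config n (p t)) (p t 0) \<le> 1"
    using count_regular_ngon_le_1 is_regular_ngon_similar assms(1,2) by fastforce
  moreover have "p t 0 = p t k"
    unfolding p_def by (rule exec_cong_robot) (use A in auto)
  ultimately show False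
    using count_config_ge_2[of 0 n k "p t"] A by simp
qed

section \<open>Unique modes and similarities\<close>

definition unique_mode :: "'a multiset \<Rightarrow> 'a \<Rightarrow> bool" where
  "unique_mode P a \<longleftrightarrow> a \<in># P \<and> (\<forall>b. b \<noteq> a \<longrightarrow> count P b < count P a)"

lemma unique_mode_unique: "unique_mode P a \<Longrightarrow> unique_mode P b \<Longrightarrow> a = b"
  unfolding unique_mode_def by (metis order.asym)

lemma unique_mode_if_count_gt:
  assumes "\<And>b. b \<noteq> a \<Longrightarrow> count P b \<le> N" "N < count P a"
  shows "unique_mode P a"
proof -
  have "a \<in># P" using assms(2) by (simp flip: count_greater_zero_iff)
  then show ?thesis using assms by (auto simp: unique_mode_def intro: le_less_trans)
qed

lemma unique_mode_image_inj:
  assumes "inj f"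
  shows "unique_mode (image_mset f P) (f a) \<longleftrightarrow> unique_mode P a"
proof -
  have cnt: "count (image_mset f P) (f b) = count P b" for b
    using count_image_mset_inj[OF assms] .
  have outside: "count (image_mset f P) b' = 0" if "b' \<notin> range f" for b'
    using that by (auto simp: count_eq_zero_iff)
  show ?thesis
  proof
    assume "unique_mode (image_mset f P) (f a)"
    then show "unique_mode P a"
      using cnt \<open>inj f\<close> by (auto simp: unique_mode_def dest: injD simp flip: count_greater_zero_iff)
  next
    assume mode: "unique_mode P a"
    have "count (image_mset f P) b' < count (image_mset f P) (f a)" if "b' \<noteq> f a" for b'
    proof (cases "b' \<in> range f")
      case True
      then obtain b where "b' = f b" by blast
      then show ?thesis using mode that cnt by (cases "b = a") (auto simp: unique_mode_def)
    next
      case False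
      then show ?thesis using mode outside cnt by (auto simp: unique_mode_def)
    qed
    then show "unique_mode (image_mset f P) (f a)"
      using mode by (auto simp: unique_mode_def)
  qed
qed

lemma ex_unique_mode_image_inj:
  assumes "inj f"
  shows "(\<exists>b. unique_mode (image_mset f P) b) \<longleftrightarrow> (\<exists>a. unique_mode P a)"
proof
  assume "\<exists>b. unique_mode (image_mset f P) b"
  then obtain b where b: "unique_mode (image_mset f P) b" ..
  then obtain a where "b = f a" by (auto simp: unique_mode_def)
  then show "\<exists>a. unique_mode P a" using b unique_mode_image_inj[OF assms] by blast
qed (use unique_mode_image_inj[OF assms] in blast)

lemma max_count_exists_avoiding:
  assumes "P \<noteq> {#}" "\<not> (\<exists>a. unique_mode P a)"
  obtains y where "y \<noteq> x" "\<And>b. count P b \<le> count P y"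
proof -
  define M where "M = Max (count P ` set_mset P)"
  have fin: "finite (count P ` set_mset P)" by simp
  have "count P ` set_mset P \<noteq> {}" using assms(1) by simp
  from Max_in[OF fin this] obtain y1 where y1: "y1 \<in># P" "count P y1 = M"
    by (auto simp: M_def)
  have le: "count P b \<le> M" for b
    using Max_ge[OF fin] by (cases "b \<in># P") (auto simp: M_def not_in_iff)
  obtain b where "b \<noteq> y1" "count P y1 \<le> count P b"
    using assms(2) y1(1) by (auto simp: unique_mode_def not_less)
  then have "count P b = M" using le y1(2) by (metis le_antisym)
  then show ?thesis
    using that le y1 \<open>b \<noteq> y1\<close> by metis
qed

lemma max_count_image_inj:
  assumes "inj f"
  shows "(\<forall>b. count (image_mset f P) b \<le> count (image_mset f P) (f y)) \<longleftrightarrow>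
         (\<forall>b. count P b \<le> count P y)"
  using count_image_mset_inj[OF assms]
  by (metis (no_types, lifting) count_eq_zero_iff zero_le imageE set_image_mset)

definition tie_move :: "nat \<Rightarrow> 'a multiset \<Rightarrow> 'a \<Rightarrow> 'a \<Rightarrow> bool" where
  "tie_move j P x y \<longleftrightarrow> (if j = 1 then y \<noteq> x \<and> (\<forall>b. count P b \<le> count P y) else y = x)"

lemma tie_move_image_inj:
  "inj f \<Longrightarrow> tie_move j (image_mset f P) (f x) (f y) \<longleftrightarrow> tie_move j P x y"
  unfolding tie_move_def using max_count_image_inj[of f P y] by (auto dest: injD)

lemma inj_affine: "(c::complex) \<noteq> 0 \<Longrightarrow> inj (\<lambda>u. b + c * u)"
  by (auto simp: inj_def)

lemma image_mset_affine_inverse: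
  assumes "(c::complex) \<noteq> 0"
  shows "image_mset (\<lambda>u. b + c * u) (image_mset (\<lambda>q. (q - b) / c) P) = P"
proof -
  have "(\<lambda>u. b + c * u) \<circ> (\<lambda>q. (q - b) / c) = id" using assms by (auto simp: fun_eq_iff)
  then show ?thesis by (simp add: image_mset.compositionality)
qed

lemma image_mset_affine_cancel:
  assumes "(c::complex) \<noteq> 0"
  shows "image_mset (\<lambda>u. b + c * u) P = image_mset (\<lambda>u. b + c * u) Q \<longleftrightarrow> P = Q"
proof -
  have "(\<lambda>q. (q - b) / c) \<circ> (\<lambda>u. b + c * u) = id" using assms by (auto simp: fun_eq_iff)
  then have "image_mset (\<lambda>q. (q - b) / c) (image_mset (\<lambda>u. b + c * u) R) = R" for R
    by (simp add: image_mset.compositionality)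
  then show ?thesis by metis
qed

lemma fair_enabled_robot_moves:
  fixes p :: "nat \<Rightarrow> nat \<Rightarrow> 'a"
  assumes fair: "fair n S"
    and idle: "\<And>t i. i \<notin> S t \<Longrightarrow> p (Suc t) i = p t i"
    and active: "\<And>t i. i < n \<Longrightarrow> i \<in> S t \<Longrightarrow> M (p t) i (p (Suc t) i)"
    and locality: "\<And>q q' i y. i < n \<Longrightarrow> \<forall>j<n. q j = q' j \<Longrightarrow> M q i y = M q' i y"
    and enabled: "r < n" "\<And>y. M (p t) r y \<Longrightarrow> y \<noteq> p t r"
  shows "\<exists>s\<ge>t. (\<forall>i<n. p s i = p t i) \<and> \<not> (\<forall>i<n. p (Suc s) i = p s i)"
proof -
  define changed where "changed s \<longleftrightarrow> \<not> (\<forall>i<n. p (Suc s) i = p s i)" for s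
  have stay: "\<forall>i<n. p s i = p t i" if "t \<le> s" "\<forall>s'<s. \<not> (t \<le> s' \<and> changed s')" for s
    using that by (induction s rule: dec_induct) (auto simp: changed_def)
  have "\<exists>s\<ge>t. changed s"
  proof (rule ccontr)
    assume "\<not> (\<exists>s\<ge>t. changed s)"
    moreover obtain t' where t': "t \<le> t'" "r \<in> S t'" using fair enabled(1) unfolding fair_def by blast
    ultimately have same: "\<forall>i<n. p t' i = p t i" "p (Suc t') r = p t' r"
      using stay[of t'] enabled(1) by (auto simp: changed_def)
    have "M (p t) r (p (Suc t') r)"
      using active[OF enabled(1) t'(2)] locality[OF enabled(1) same(1)] by simp
    moreover have "p (Suc t') r = p t r" using same enabled(1) by simp
    ultimately show False using enabled(2) by metis
  qed
  then obtain s where "t \<le> s" "changed s" "\<forall>s'<s. \<not> (t \<le> s' \<and> changed s')"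
    using exists_least_iff[of "\<lambda>s. t \<le> s \<and> changed s"] by blast
  then show ?thesis using stay[of s] unfolding changed_def by blast
qed

lemma bounded_potential_cannot_always_decrease:
  fixes V :: "nat \<Rightarrow> int"
  assumes "\<And>t. t0 \<le> t \<Longrightarrow> L \<le> V t" "\<And>t. t0 \<le> t \<Longrightarrow> \<exists>s\<ge>t. V (Suc s) < V t"
  shows False
proof -
  have "t0 \<le> t \<Longrightarrow> False" for t
  proof (induction "nat (V t - L)" arbitrary: t rule: less_induct)
    case less
    then obtain s where s: "t \<le> s" "V (Suc s) < V t" using assms(2) by blast
    moreover have "L \<le> V (Suc s)" using assms(1) less.prems s(1) by simp
    ultimately have "nat (V (Suc s) - L) < nat (V t - L)" by simp
    moreover have "t0 \<le> Suc s" using less.prems s(1) by simp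
    ultimately show False by (rule less.hyps)
  qed
  then show False by blast
qed

section \<open>The algorithm\<close>

text \<open>The goal is g0 + z 0, ..., g0 + z (n - 1), where g0 has maximal multiplicity
  n - m + 1, occupied by the indices 0 and m, ..., n - 1.\<close>

locale goal_enumeration =
  fixes n m :: nat and z :: "nat \<Rightarrow> complex"
  assumes m_pos: "1 \<le> m" and m_le_n: "m \<le> n"
    and z_0: "z 0 = 0"
    and z_nonzero: "\<And>i. 1 \<le> i \<Longrightarrow> i < m \<Longrightarrow> z i \<noteq> 0"
    and z_zero: "\<And>i. m \<le> i \<Longrightarrow> z i = 0"
    and card_z_le: "\<And>\<zeta>. \<zeta> \<noteq> 0 \<Longrightarrow> card {i. i < n \<and> z i = \<zeta>} \<le> n - m + 1"
begin

lemma n_pos: "1 \<le> n"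
  using m_pos m_le_n by simp

definition partial_goal_pos :: "nat \<Rightarrow> complex \<Rightarrow> complex \<Rightarrow> nat \<Rightarrow> complex" where
  "partial_goal_pos k a w i = (if 1 \<le> i \<and> i < k then a + w * z i else a)"

definition partial_goal :: "nat \<Rightarrow> complex \<Rightarrow> complex \<Rightarrow> complex multiset" where
  "partial_goal k a w = mset (map (partial_goal_pos k a w) [0..<n])"

text \<open>A building configuration consists of copies of the anchor a and the goal points
  1, ..., k scaled by w about a, where k = n - count P a is the number of points off a.\<close>

definition building :: "complex multiset \<Rightarrow> complex \<Rightarrow> bool" where
  "building P a \<longleftrightarrow> (\<exists>w. w \<noteq> 0 \<and> P = partial_goal (n - count P a + 1) a w)"

definition goal_formed :: "complex multiset \<Rightarrow> bool" where
  "goal_formed P \<longleftrightarrow> (\<exists>a w. w \<noteq> 0 \<and> P = partial_goal m a w)"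

lemma count_partial_goal_anchor:
  assumes "1 \<le> k" "k \<le> m" "w \<noteq> 0"
  shows "count (partial_goal k a w) a = n - k + 1"
proof -
  have "{i. i < n \<and> partial_goal_pos k a w i = a} = insert 0 {k..<n}"
    using assms n_pos z_nonzero by (auto simp: partial_goal_pos_def)
  then have "card {i. i < n \<and> partial_goal_pos k a w i = a} = Suc (n - k)"
    using assms(1) by simp
  then show ?thesis
    using assms m_le_n unfolding partial_goal_def count_mset_map_upt by simp
qed

lemma count_partial_goal_other:
  assumes "b \<noteq> a" "w \<noteq> 0"
  shows "count (partial_goal k a w) b \<le> n - m + 1"
proof -
  have "{i. i < n \<and> partial_goal_pos k a w i = b} \<subseteq> {i. i < n \<and> z i = (b - a) / w}"
    using assms by (auto simp: partial_goal_pos_def field_simps split: if_splits)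
  then have "card {i. i < n \<and> partial_goal_pos k a w i = b} \<le> card {i. i < n \<and> z i = (b - a) / w}"
    by (intro card_mono) auto
  also have "\<dots> \<le> n - m + 1" using assms by (intro card_z_le) auto
  finally show ?thesis unfolding partial_goal_def count_mset_map_upt .
qed

lemma partial_goal_ge: "m \<le> k \<Longrightarrow> partial_goal k a w = partial_goal m a w"
  unfolding partial_goal_def
  by (intro arg_cong[where f=mset] map_cong) (auto simp: partial_goal_pos_def z_zero)

lemma partial_goal_Suc:
  assumes "k < n"
  shows "partial_goal (Suc k) a w = partial_goal k a w - {#a#} + {#a + w * z k#}"
proof -
  have "partial_goal_pos (Suc k) a w = (partial_goal_pos k a w)(k := a + w * z k)"
    by (cases "k = 0") (auto simp: partial_goal_pos_def fun_eq_iff z_0 less_Suc_eq)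
  moreover have "partial_goal_pos k a w k = a" by (simp add: partial_goal_pos_def)
  ultimately show ?thesis
    using mset_map_upt_fun_upd[OF assms, of "partial_goal_pos k a w"] by (simp add: partial_goal_def)
qed

lemma partial_goal_affine:
  "image_mset (\<lambda>u. b + c * u) (partial_goal k a w) = partial_goal k (b + c * a) (c * w)"
  unfolding partial_goal_def mset_map[symmetric] map_map
  by (intro arg_cong[where f=mset] map_cong) (auto simp: partial_goal_pos_def algebra_simps)

lemma affine_eq_partial_goal_iff:
  assumes "c \<noteq> 0"
  shows "image_mset (\<lambda>u. b + c * u) P = partial_goal k (b + c * a) w \<longleftrightarrow> P = partial_goal k a (w / c)"
proof -
  have "partial_goal k (b + c * a) w = image_mset (\<lambda>u. b + c * u) (partial_goal k a (w / c))"
    using partial_goal_affine[of b c k a "w / c"] assms by simp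
  then show ?thesis using image_mset_affine_cancel[OF assms] by simp
qed

lemma building_affine:
  assumes "c \<noteq> 0"
  shows "building (image_mset (\<lambda>u. b + c * u) P) (b + c * a) \<longleftrightarrow> building P a"
proof -
  have "count (image_mset (\<lambda>u. b + c * u) P) (b + c * a) = count P a"
    by (rule count_image_mset_inj[OF inj_affine[OF assms]])
  moreover have "(\<exists>w'. w' \<noteq> 0 \<and> image_mset (\<lambda>u. b + c * u) P = partial_goal k (b + c * a) w')
      \<longleftrightarrow> (\<exists>w. w \<noteq> 0 \<and> P = partial_goal k a w)" for k
    using affine_eq_partial_goal_iff[OF assms] assms
    by (metis divide_eq_0_iff mult_eq_0_iff nonzero_mult_div_cancel_left)
  ultimately show ?thesis by (simp add: building_def)
qed

definition mode_move :: "nat \<Rightarrow> complex multiset \<Rightarrow> complex \<Rightarrow> complex \<Rightarrow> complex \<Rightarrow> bool" where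
  "mode_move j P a x y \<longleftrightarrow>
     (if building P a then
        (let k = n - count P a in
         if x = a \<and> j = k + 1 then \<exists>w. w \<noteq> 0 \<and> P = partial_goal (k + 1) a w \<and> y = a + w * z j
         else if x \<noteq> a \<and> \<not> (1 \<le> j \<and> j \<le> k) then y = a
         else y = x)
      else y = a)"

definition allowed_move :: "nat \<Rightarrow> complex multiset \<Rightarrow> complex \<Rightarrow> complex \<Rightarrow> bool" where
  "allowed_move j P x y \<longleftrightarrow>
     (if \<exists>a. unique_mode P a then \<exists>a. unique_mode P a \<and> mode_move j P a x y else tie_move j P x y)"

lemma mode_move_affine:
  assumes "c \<noteq> 0"
  shows "mode_move j (image_mset (\<lambda>u. b + c * u) P) (b + c * a) (b + c * x) (b + c * y)
         \<longleftrightarrow> mode_move j P a x y"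
proof -
  let ?f = "\<lambda>u. b + c * u"
  have cnt: "count (image_mset ?f P) (?f a) = count P a"
    by (rule count_image_mset_inj[OF inj_affine[OF assms]])
  have eq: "?f u = ?f v \<longleftrightarrow> u = v" for u v using assms by simp
  have place: "(\<exists>w'. w' \<noteq> 0 \<and> image_mset ?f P = partial_goal k (?f a) w' \<and> ?f y = ?f a + w' * z j)
      \<longleftrightarrow> (\<exists>w. w \<noteq> 0 \<and> P = partial_goal k a w \<and> y = a + w * z j)" for k
  proof
    assume "\<exists>w'. w' \<noteq> 0 \<and> image_mset ?f P = partial_goal k (?f a) w' \<and> ?f y = ?f a + w' * z j"
    then obtain w' where "w' \<noteq> 0" "P = partial_goal k a (w' / c)" "c * y = c * (a + w' / c * z j)"
      using affine_eq_partial_goal_iff[OF assms] assms by (auto simp: algebra_simps)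
    then show "\<exists>w. w \<noteq> 0 \<and> P = partial_goal k a w \<and> y = a + w * z j"
      using assms by (intro exI[of _ "w' / c"]) simp
  next
    assume "\<exists>w. w \<noteq> 0 \<and> P = partial_goal k a w \<and> y = a + w * z j"
    then obtain w where w: "w \<noteq> 0" "P = partial_goal k a w" "y = a + w * z j" by blast
    then have "image_mset ?f P = partial_goal k (?f a) (c * w)" "?f y = ?f a + (c * w) * z j"
      by (simp_all add: partial_goal_affine) (simp add: algebra_simps)
    then show "\<exists>w'. w' \<noteq> 0 \<and> image_mset ?f P = partial_goal k (?f a) w' \<and> ?f y = ?f a + w' * z j"
      using assms w(1) by (intro exI[of _ "c * w"]) simp
  qed
  show ?thesis
    unfolding mode_move_def building_affine[OF assms] cnt eq place Let_def ..
qed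

lemma allowed_move_affine:
  assumes "c \<noteq> 0"
  shows "allowed_move j (image_mset (\<lambda>u. b + c * u) P) (b + c * x) (b + c * y)
         \<longleftrightarrow> allowed_move j P x y"
proof -
  let ?f = "\<lambda>u. b + c * u"
  have inj: "inj ?f" by (rule inj_affine[OF assms])
  have "(\<exists>a'. unique_mode (image_mset ?f P) a' \<and> mode_move j (image_mset ?f P) a' (?f x) (?f y))
      \<longleftrightarrow> (\<exists>a. unique_mode P a \<and> mode_move j P a x y)"
  proof
    assume "\<exists>a'. unique_mode (image_mset ?f P) a' \<and> mode_move j (image_mset ?f P) a' (?f x) (?f y)"
    then obtain a' where a': "unique_mode (image_mset ?f P) a'" "mode_move j (image_mset ?f P) a' (?f x) (?f y)"
      by blast
    then obtain a where "a' = ?f a" by (auto simp: unique_mode_def)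
    then show "\<exists>a. unique_mode P a \<and> mode_move j P a x y"
      using a' unique_mode_image_inj[OF inj] mode_move_affine[OF assms] by blast
  qed (use unique_mode_image_inj[OF inj] mode_move_affine[OF assms] in blast)
  then show ?thesis
    unfolding allowed_move_def ex_unique_mode_image_inj[OF inj] tie_move_image_inj[OF inj]
    by (rule arg_cong[where f = "\<lambda>X. if _ then X else _"])
qed

lemma allowed_move_exists:
  assumes "P \<noteq> {#}"
  shows "\<exists>y. allowed_move j P x y"
proof (cases "\<exists>a. unique_mode P a")
  case True
  then obtain a where a: "unique_mode P a" ..
  have "\<exists>y. mode_move j P a x y"
  proof (cases "building P a \<and> x = a \<and> j = n - count P a + 1")
    case True
    then obtain w where "w \<noteq> 0" "P = partial_goal (n - count P a + 1) a w"
      by (auto simp: building_def)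
    then show ?thesis using True unfolding mode_move_def Let_def by auto
  qed (auto simp: mode_move_def Let_def)
  then show ?thesis using a by (auto simp: allowed_move_def)
next
  case False
  then obtain y where "y \<noteq> x" "\<And>b. count P b \<le> count P y"
    using max_count_exists_avoiding[OF assms] by metis
  then have "tie_move j P x (if j = 1 then y else x)"
    by (simp add: tie_move_def)
  then show ?thesis using False unfolding allowed_move_def by auto
qed

text \<open>An empty observation never occurs; the value there only makes the target
  functions pairwise distinct.\<close>

definition target :: "nat \<Rightarrow> target_fun" where
  "target j Q = (if Q = {#} then of_nat j else SOME y. allowed_move j Q 0 y)"

lemma inj_target: "inj target"
  by (rule injI) (metis of_nat_eq_iff target_def)

text \<open>Allowed moves are invariant under similarities, so a move chosen in the robot's own
  frame is allowed in the global one.\<close>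

lemma target_allowed_move:
  assumes "c \<noteq> 0" "P \<noteq> {#}"
  shows "allowed_move j P x (x + c * target j (image_mset (\<lambda>q. (q - x) / c) P))"
proof -
  define Q where "Q = image_mset (\<lambda>q. (q - x) / c) P"
  have "Q \<noteq> {#}" using assms(2) by (simp add: Q_def)
  then have "allowed_move j Q 0 (target j Q)"
    unfolding target_def using someI_ex[OF allowed_move_exists] by simp
  then have "allowed_move j (image_mset (\<lambda>u. x + c * u) Q) (x + c * 0) (x + c * target j Q)"
    using allowed_move_affine[OF assms(1)] by blast
  then show ?thesis
    using image_mset_affine_inverse[OF assms(1)] by (simp add: Q_def)
qed

section \<open>A potential function\<close>

definition displaced :: "(nat \<Rightarrow> complex) \<Rightarrow> complex \<Rightarrow> nat set" where
  "displaced p a = {i. i < n \<and> p i \<noteq> a}"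

lemma finite_displaced [simp]: "finite (displaced p a)"
  by (simp add: displaced_def)

lemma card_displaced: "card (displaced p a) = n - count (config n p) a"
proof -
  have "{i. i < n \<and> p i = a} \<union> displaced p a = {..<n}"
    "{i. i < n \<and> p i = a} \<inter> displaced p a = {}"
    by (auto simp: displaced_def)
  then have "card {i. i < n \<and> p i = a} + card (displaced p a) = n"
    using card_Un_disjoint[of "{i. i < n \<and> p i = a}" "displaced p a"] by simp
  then show ?thesis by (simp add: count_config)
qed

lemma count_config_eq_displaced: "count (config n p) a = n - card (displaced p a)"
proof -
  have "count (config n p) a \<le> n"
    unfolding count_config using card_mono[of "{..<n}" "{i. i < n \<and> p i = a}"] by auto
  then show ?thesis by (simp add: card_displaced)
qed

lemma card_displaced_le: "card (displaced p a) \<le> n"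
  by (simp add: card_displaced)

lemma displaced_cong: "(\<And>i. i < n \<Longrightarrow> p i = q i) \<Longrightarrow> displaced p a = displaced q a"
  by (auto simp: displaced_def)

lemma gather_displaced:
  assumes "\<forall>i<n. p' i = p i \<or> p' i = a"
  shows "displaced p' a \<subseteq> displaced p a"
    and "displaced p' a = displaced p a \<Longrightarrow> \<forall>i<n. p' i = p i"
  using assms by (auto simp: displaced_def set_eq_iff)

lemma gather_count_other:
  assumes "\<forall>i<n. p' i = p i \<or> p' i = a" "b \<noteq> a"
  shows "count (config n p') b \<le> count (config n p) b"
  unfolding count_config by (rule card_mono) (use assms in auto)

text \<open>Index 0 is never placed, so it weighs more than every index that can be placed.\<close>

definition weight :: "nat \<Rightarrow> int" where
  "weight j = 4 ^ (if j = 0 then n + 1 else j)"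

lemma pow_le_weight:
  assumes "k \<le> n" "j = 0 \<or> k < j"
  shows "4 ^ (k + 1) \<le> weight j"
proof (cases "j = 0")
  case True
  then show ?thesis using assms power_increasing[of "k + 1" "n + 1" "4::int"] by (simp add: weight_def)
next
  case False
  then show ?thesis using assms power_increasing[of "k + 1" j "4::int"] by (simp add: weight_def)
qed

definition weight_sum :: "(nat \<Rightarrow> nat) \<Rightarrow> nat set \<Rightarrow> int" where
  "weight_sum idf D = (\<Sum>i\<in>D. weight (idf i))"

lemma weight_sum_remove_le:
  assumes "finite B" "A \<subseteq> B - {i}" "i \<in> B"
  shows "weight_sum idf A + weight (idf i) \<le> weight_sum idf B"
proof -
  have "weight_sum idf A \<le> weight_sum idf (B - {i})"
    unfolding weight_sum_def using assms by (intro sum_mono2) (auto simp: weight_def)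
  then show ?thesis
    using sum.remove[OF assms(1,3), of "\<lambda>i. weight (idf i)"] unfolding weight_sum_def by linarith
qed

lemma weight_sum_insert:
  "finite D \<Longrightarrow> r \<notin> D \<Longrightarrow> weight_sum idf (insert r D) = weight (idf r) + weight_sum idf D"
  by (simp add: weight_sum_def)

text \<open>A robot returning to the anchor removes a weight larger than the building bonus,
  and a placement, of weight 4 ^ (k + 1), is paid for by the bonus growing from 2 * 4 ^ k to
  2 * 4 ^ (k + 1).\<close>

definition potential :: "(nat \<Rightarrow> nat) \<Rightarrow> complex \<Rightarrow> (nat \<Rightarrow> complex) \<Rightarrow> int" where
  "potential idf a p = weight_sum idf (displaced p a)
     - (if building (config n p) a then 2 * 4 ^ card (displaced p a) else 0)"

lemma potential_cong: "(\<And>i. i < n \<Longrightarrow> p i = q i) \<Longrightarrow> potential idf a p = potential idf a q"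
  using config_cong[of n p q] displaced_cong[of p q] by (simp add: potential_def)

lemma potential_lower_bound: "- (2 * 4 ^ n) \<le> potential idf a p"
proof -
  have "(4::int) ^ card (displaced p a) \<le> 4 ^ n"
    by (intro power_increasing card_displaced_le) auto
  moreover have "0 \<le> weight_sum idf (displaced p a)"
    unfolding weight_sum_def by (intro sum_nonneg) (simp add: weight_def)
  moreover have "weight_sum idf (displaced p a) - 2 * 4 ^ card (displaced p a) \<le> potential idf a p"
    by (simp add: potential_def)
  ultimately show ?thesis by linarith
qed

lemma potential_upper_bound: "potential idf a p \<le> weight_sum idf (displaced p a)"
  by (simp add: potential_def)

lemma potential_decrease_return:
  assumes "displaced p' a \<subseteq> displaced p a - {i}" "i \<in> displaced p a"
    and "building (config n p) a \<Longrightarrow> idf i = 0 \<or> card (displaced p a) < idf i"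
  shows "potential idf a p' < potential idf a p"
proof -
  let ?S = "weight_sum idf" and ?k = "card (displaced p a)"
  have "?S (displaced p' a) + weight (idf i) \<le> ?S (displaced p a)"
    by (rule weight_sum_remove_le) (use assms in auto)
  moreover have "building (config n p) a \<Longrightarrow> 4 ^ (?k + 1) \<le> weight (idf i)"
    using pow_le_weight[OF card_displaced_le] assms(3) by blast
  moreover have "0 < weight (idf i)" by (simp add: weight_def)
  ultimately have "?S (displaced p' a) < potential idf a p"
    unfolding potential_def by (cases "building (config n p) a") simp_all
  then show ?thesis using potential_upper_bound[of idf a p'] by simp
qed

lemma potential_decrease_place:
  assumes "displaced p' a = insert r (displaced p a)" "r \<notin> displaced p a"
    and "idf r = card (displaced p a) + 1"
    and "building (config n p) a" "building (config n p') a"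
  shows "potential idf a p' < potential idf a p"
proof -
  have "weight (idf r) = 4 ^ (card (displaced p a) + 1)" using assms(3) by (simp add: weight_def)
  then show ?thesis using assms by (simp add: potential_def weight_sum_insert)
qed

lemma potential_decrease_place_return:
  assumes "displaced p' a \<subseteq> insert r (displaced p a) - {i}" "i \<in> displaced p a"
    and "r \<notin> displaced p a" "idf r = card (displaced p a) + 1"
    and "idf i = 0 \<or> card (displaced p a) + 1 < idf i" "card (displaced p a) < n"
    and "building (config n p) a"
  shows "potential idf a p' < potential idf a p"
proof -
  let ?S = "weight_sum idf" and ?k = "card (displaced p a)"
  have "?S (displaced p' a) + weight (idf i) \<le> ?S (insert r (displaced p a))"
    by (rule weight_sum_remove_le) (use assms in auto)
  moreover have "?S (insert r (displaced p a)) = 4 ^ (?k + 1) + ?S (displaced p a)"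
    using assms(3,4) by (simp add: weight_sum_insert weight_def)
  moreover have "4 ^ (?k + 2) \<le> weight (idf i)"
    using pow_le_weight[of "?k + 1"] assms(5,6) by simp
  moreover have "(0::int) < 4 ^ ?k" "(4::int) ^ (?k + 1) = 4 * 4 ^ ?k" "(4::int) ^ (?k + 2) = 16 * 4 ^ ?k"
    by simp_all
  moreover have "potential idf a p = ?S (displaced p a) - 2 * 4 ^ ?k"
    using assms(7) by (simp add: potential_def)
  ultimately show ?thesis using potential_upper_bound[of idf a p'] by linarith
qed

text \<open>Robot i runs the target function with index idf i.\<close>

definition legal_step :: "(nat \<Rightarrow> nat) \<Rightarrow> (nat \<Rightarrow> complex) \<Rightarrow> (nat \<Rightarrow> complex) \<Rightarrow> bool" where
  "legal_step idf p p' \<longleftrightarrow> (\<forall>i<n. p' i = p i \<or> allowed_move (idf i) (config n p) (p i) (p' i))"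

lemma allowed_move_unique_mode:
  "unique_mode P a \<Longrightarrow> allowed_move j P x y \<longleftrightarrow> mode_move j P a x y"
  by (auto simp: allowed_move_def dest: unique_mode_unique)

lemma building_partial_goal:
  assumes "building (config n p) a" "\<not> goal_formed (config n p)"
  obtains w where "w \<noteq> 0" "config n p = partial_goal (card (displaced p a) + 1) a w"
    and "card (displaced p a) + 1 < m"
proof -
  obtain w where w: "w \<noteq> 0" "config n p = partial_goal (card (displaced p a) + 1) a w"
    using assms(1) by (auto simp: building_def card_displaced)
  moreover have "card (displaced p a) + 1 < m"
  proof (rule ccontr)
    assume "\<not> card (displaced p a) + 1 < m"
    then have "goal_formed (config n p)"
      using w partial_goal_ge[of "card (displaced p a) + 1" a w] by (auto simp: goal_formed_def)
    with assms(2) show False ..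
  qed
  ultimately show ?thesis using that by blast
qed

lemma building_move_cases:
  assumes "building (config n p) a" "mode_move j (config n p) a x y"
  shows "y = x \<or> (x \<noteq> a \<and> (j = 0 \<or> card (displaced p a) < j) \<and> y = a)
    \<or> (x = a \<and> j = card (displaced p a) + 1
       \<and> (\<exists>w. w \<noteq> 0 \<and> config n p = partial_goal j a w \<and> y = a + w * z j))"
proof -
  let ?k = "card (displaced p a)"
  have k: "n - count (config n p) a = ?k" by (simp add: card_displaced)
  have "if x = a \<and> j = ?k + 1 then \<exists>w. w \<noteq> 0 \<and> config n p = partial_goal (?k + 1) a w \<and> y = a + w * z j
       else if x \<noteq> a \<and> \<not> (1 \<le> j \<and> j \<le> ?k) then y = a else y = x"
    using assms unfolding mode_move_def Let_def k by simp
  then show ?thesis by (auto split: if_splits)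
qed

lemma unique_mode_gather:
  assumes "unique_mode (config n p) a" "\<forall>i<n. p' i = p i \<or> p' i = a"
  shows "unique_mode (config n p') a"
proof -
  have "card (displaced p' a) \<le> card (displaced p a)"
    using gather_displaced(1)[OF assms(2)] by (intro card_mono) auto
  then have "count (config n p) a \<le> count (config n p') a"
    by (simp add: count_config_eq_displaced)
  moreover have "count (config n p') b < count (config n p) a" if "b \<noteq> a" for b
    using gather_count_other[OF assms(2) that] assms(1) that
    by (auto simp: unique_mode_def intro: le_less_trans)
  ultimately show ?thesis
    using assms(1) by (auto simp: unique_mode_def intro: less_le_trans simp flip: count_greater_zero_iff)
qed

lemma step_return:
  assumes "unique_mode (config n p) a"
    and moves: "\<forall>i<n. p' i = p i \<or>
      (p' i = a \<and> (building (config n p) a \<longrightarrow> idf i = 0 \<or> card (displaced p a) < idf i))"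
  shows "unique_mode (config n p') a \<and> ((\<forall>i<n. p' i = p i) \<or> potential idf a p' < potential idf a p)"
proof -
  have gather: "\<forall>i<n. p' i = p i \<or> p' i = a" using moves by blast
  have "(\<forall>i<n. p' i = p i) \<or> potential idf a p' < potential idf a p"
  proof (cases "displaced p' a = displaced p a")
    case False
    then obtain i where i: "i \<in> displaced p a" "i \<notin> displaced p' a"
      using gather_displaced(1)[OF gather] by blast
    then have "building (config n p) a \<Longrightarrow> idf i = 0 \<or> card (displaced p a) < idf i"
      using moves by (auto simp: displaced_def)
    moreover have "displaced p' a \<subseteq> displaced p a - {i}"
      using gather_displaced(1)[OF gather] i(2) by blast
    ultimately show ?thesis using potential_decrease_return i(1) by blast
  qed (use gather_displaced(2)[OF gather] in blast)
  then show ?thesis using unique_mode_gather[OF assms(1) gather] by blast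
qed

lemma step_place:
  assumes building: "building (config n p) a" and not_complete: "\<not> goal_formed (config n p')"
    and k: "k = card (displaced p a)" "k + 1 < m"
    and w: "w \<noteq> 0" "config n p = partial_goal (k + 1) a w"
    and r: "r < n" "p r = a" "p' r = a + w * z (k + 1)" "idf r = k + 1"
    and others: "\<forall>i<n. i \<noteq> r \<longrightarrow> p' i = p i \<or> (p' i = a \<and> (idf i = 0 \<or> k + 1 < idf i))"
  shows "unique_mode (config n p') a \<and> potential idf a p' < potential idf a p"
proof -
  define q where "q = p(r := p' r)"
  have "p' r \<noteq> a" using r(3) w(1) z_nonzero[of "k + 1"] k(2) by simp
  have config_q: "config n q = partial_goal (k + 2) a w"
    using config_fun_upd[OF r(1)] partial_goal_Suc[of "k + 1" a w] k(2) m_le_n w(2) r(2,3)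
    by (simp add: q_def)
  have "r \<notin> displaced p a" using r(2) by (simp add: displaced_def)
  have displaced_q: "displaced q a = insert r (displaced p a)"
    using r(1) \<open>p' r \<noteq> a\<close> by (auto simp: displaced_def q_def)
  have gather: "\<forall>i<n. p' i = q i \<or> p' i = a" using others by (auto simp: q_def)
  have count_other: "count (config n p') b \<le> n - m + 1" if "b \<noteq> a" for b
  proof -
    have "count (config n p') b \<le> count (config n q) b" by (rule gather_count_other[OF gather that])
    also have "\<dots> \<le> n - m + 1" unfolding config_q by (rule count_partial_goal_other[OF that w(1)])
    finally show ?thesis .
  qed
  have card_q: "card (displaced q a) = k + 1"
    using displaced_q \<open>r \<notin> displaced p a\<close> k(1) by simp
  show ?thesis
  proof (cases "displaced p' a = displaced q a")
    case True
    have "\<forall>i<n. p' i = q i" by (rule gather_displaced(2)[OF gather True])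
    then have "config n p' = partial_goal (k + 2) a w"
      using config_cong[of n p' q] config_q by simp
    have "k + 2 < m"
    proof (rule ccontr)
      assume "\<not> k + 2 < m"
      then have "goal_formed (config n p')"
        using \<open>config n p' = _\<close> w(1) partial_goal_ge[of "k + 2" a w] by (auto simp: goal_formed_def)
      with not_complete show False ..
    qed
    have count_a: "count (config n p') a = n - (k + 1)"
      using True card_q by (simp add: count_config_eq_displaced)
    then have "unique_mode (config n p') a"
      using count_other \<open>k + 2 < m\<close> m_le_n by (intro unique_mode_if_count_gt) auto
    moreover have "building (config n p') a"
      using \<open>config n p' = _\<close> count_a w(1) \<open>k + 2 < m\<close> m_le_n
      by (auto simp: building_def Suc_diff_Suc)
    ultimately show ?thesis
      using potential_decrease_place[of p' a r p idf] True displaced_q \<open>r \<notin> displaced p a\<close>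
        r(4) k(1) building by simp
  next
    case False
    then obtain i where i: "i \<in> displaced q a" "i \<notin> displaced p' a"
      using gather_displaced(1)[OF gather] by blast
    then have "i \<noteq> r" using \<open>p' r \<noteq> a\<close> r(1) by (auto simp: displaced_def)
    then have "i \<in> displaced p a" using i(1) displaced_q by blast
    then have "i < n" "p i \<noteq> a" "p' i = a" using i(2) by (auto simp: displaced_def)
    then have "idf i = 0 \<or> k + 1 < idf i" using others \<open>i \<noteq> r\<close> by metis
    have sub: "displaced p' a \<subseteq> insert r (displaced p a) - {i}"
      using gather_displaced(1)[OF gather] i(2) displaced_q by blast
    have "card (displaced p' a) \<le> card (insert r (displaced p a) - {i})"
      by (rule card_mono) (use sub in auto)
    also have "\<dots> = k" using card_q displaced_q i(1) by simp
    finally have "card (displaced p' a) < k + 1" by simp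
    then have "n - m + 1 < count (config n p') a"
      using k(2) m_le_n by (simp add: count_config_eq_displaced)
    then have "unique_mode (config n p') a"
      using count_other by (intro unique_mode_if_count_gt) auto
    moreover have "potential idf a p' < potential idf a p"
      using potential_decrease_place_return[OF sub] \<open>i \<in> displaced p a\<close> \<open>r \<notin> displaced p a\<close>
        r(4) k \<open>idf i = 0 \<or> k + 1 < idf i\<close> m_le_n building by simp
    ultimately show ?thesis ..
  qed
qed

lemma step_unique_mode:
  assumes inj: "inj_on idf {..<n}" and mode: "unique_mode (config n p) a"
    and not_complete: "\<not> goal_formed (config n p)" "\<not> goal_formed (config n p')"
    and legal: "legal_step idf p p'"
  shows "unique_mode (config n p') a \<and> ((\<forall>i<n. p' i = p i) \<or> potential idf a p' < potential idf a p)"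
proof -
  let ?k = "card (displaced p a)"
  have moves: "p' i = p i \<or> mode_move (idf i) (config n p) a (p i) (p' i)" if "i < n" for i
    using legal that allowed_move_unique_mode[OF mode] by (auto simp: legal_step_def)
  have building_moves: "p' i = p i \<or> (p i \<noteq> a \<and> (idf i = 0 \<or> ?k < idf i) \<and> p' i = a)
      \<or> (p i = a \<and> idf i = ?k + 1
         \<and> (\<exists>w. w \<noteq> 0 \<and> config n p = partial_goal (idf i) a w \<and> p' i = a + w * z (idf i)))"
    if "i < n" "building (config n p) a" for i
    using moves[OF that(1)] building_move_cases[OF that(2)] by blast
  show ?thesis
  proof (cases "\<exists>r<n. p r = a \<and> p' r \<noteq> a")
    case True
    then obtain r where r: "r < n" "p r = a" "p' r \<noteq> a" by blast
    have building: "building (config n p) a"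
    proof (rule ccontr)
      assume "\<not> building (config n p) a"
      then have "p' r = a" using moves[OF r(1)] r(2) by (auto simp: mode_move_def)
      with r(3) show False ..
    qed
    then obtain w where w: "w \<noteq> 0" "config n p = partial_goal (?k + 1) a w"
      and "p' r = a + w * z (?k + 1)" "idf r = ?k + 1"
      using building_moves[OF r(1)] r by auto
    moreover have "?k + 1 < m"
      using building_partial_goal[OF building not_complete(1)] by blast
    moreover have "p' i = p i \<or> (p' i = a \<and> (idf i = 0 \<or> ?k + 1 < idf i))"
      if "i < n" "i \<noteq> r" for i
    proof -
      have "idf i \<noteq> idf r" using inj that r(1) by (auto dest: inj_onD)
      then show ?thesis using building_moves[OF that(1) building] \<open>idf r = ?k + 1\<close> by auto
    qed
    ultimately show ?thesis
      using step_place[OF building not_complete(2) refl] r by blast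
  next
    case False
    have "p' i = p i \<or> (p' i = a \<and> (building (config n p) a \<longrightarrow> idf i = 0 \<or> ?k < idf i))"
      if "i < n" for i
    proof (cases "building (config n p) a")
      case True
      then show ?thesis using building_moves[OF that True] False that by auto
    next
      case False
      then show ?thesis using moves[OF that] by (auto simp: mode_move_def)
    qed
    then show ?thesis using step_return[OF mode] by blast
  qed
qed

lemma step_no_mode:
  assumes inj: "inj_on idf {..<n}" and no_mode: "\<not> (\<exists>a. unique_mode (config n p) a)"
    and legal: "legal_step idf p p'"
  shows "(\<forall>i<n. p' i = p i) \<or> (\<exists>a. unique_mode (config n p') a)"
proof (cases "\<forall>i<n. p' i = p i")
  case False
  then obtain r where r: "r < n" "p' r \<noteq> p r" by blast
  have moves: "p' i = p i \<or> tie_move (idf i) (config n p) (p i) (p' i)" if "i < n" for i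
    using legal that no_mode by (auto simp: legal_step_def allowed_move_def)
  then have "tie_move (idf r) (config n p) (p r) (p' r)" using r by blast
  then have "idf r = 1" and max: "\<And>b. count (config n p) b \<le> count (config n p) (p' r)"
    using r(2) unfolding tie_move_def by (auto split: if_splits)
  have "p' i = p i" if "i < n" "i \<noteq> r" for i
  proof -
    have "idf i \<noteq> idf r" using inj that r(1) by (metis inj_onD lessThan_iff)
    then have "idf i \<noteq> 1" using \<open>idf r = 1\<close> by simp
    then show ?thesis using moves[OF that(1)] by (simp add: tie_move_def)
  qed
  then have config': "config n p' = config n p - {#p r#} + {#p' r#}"
    using config_cong[of n p' "p(r := p' r)"] config_fun_upd[OF r(1)] by auto
  have "count (config n p') b < count (config n p') (p' r)" if "b \<noteq> p' r" for b
    using max[of b] that r(2) unfolding config' by (cases "b = p r") auto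
  then have "unique_mode (config n p') (p' r)"
    unfolding unique_mode_def config' by simp
  then show ?thesis by blast
qed simp

lemma exists_enabled_robot:
  assumes surj: "\<forall>j<n. \<exists>i<n. idf i = j" and not_complete: "\<not> goal_formed (config n p)"
  shows "\<exists>r<n. \<forall>y. allowed_move (idf r) (config n p) (p r) y \<longrightarrow> y \<noteq> p r"
proof (cases "\<exists>a. unique_mode (config n p) a")
  case True
  then obtain a where mode: "unique_mode (config n p) a" ..
  let ?k = "card (displaced p a)"
  show ?thesis
  proof (cases "building (config n p) a")
    case building: True
    have k: "n - count (config n p) a = ?k" by (simp add: card_displaced)
    show ?thesis
    proof (cases "\<exists>i<n. p i \<noteq> a \<and> \<not> (1 \<le> idf i \<and> idf i \<le> ?k)")
      case True
      then obtain i where "i < n" "p i \<noteq> a" "\<not> (1 \<le> idf i \<and> idf i \<le> ?k)" by blast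
      then show ?thesis
        using building allowed_move_unique_mode[OF mode]
        by (intro exI[of _ i]) (auto simp: mode_move_def Let_def k)
    next
      case False
      have "?k + 1 < m" using building_partial_goal[OF building not_complete] by blast
      then obtain r where r: "r < n" "idf r = ?k + 1" using surj m_le_n by (metis less_le_trans)
      then have "p r = a" using False by fastforce
      moreover have "z (?k + 1) \<noteq> 0" using z_nonzero \<open>?k + 1 < m\<close> by simp
      ultimately show ?thesis
        using r building allowed_move_unique_mode[OF mode]
        by (intro exI[of _ r]) (auto simp: mode_move_def Let_def k)
    qed
  next
    case False
    have "building (partial_goal 1 a 1) a"
      using count_partial_goal_anchor[of 1 1 a] m_pos n_pos unfolding building_def
      by (intro exI[of _ 1]) simp
    then have "config n p \<noteq> partial_goal 1 a 1" using False by auto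
    then obtain i where "i < n" "p i \<noteq> a"
      using config_cong[of n p "partial_goal_pos 1 a 1"]
      by (fastforce simp: partial_goal_def partial_goal_pos_def config_def)
    then show ?thesis
      using False allowed_move_unique_mode[OF mode] by (intro exI[of _ i]) (auto simp: mode_move_def)
  qed
next
  case False
  have "1 < n"
  proof (rule ccontr)
    assume "\<not> 1 < n"
    then have "n = 1" using n_pos by simp
    then have "config n p = {#p 0#}" by (simp add: config_def)
    then show False using False by (auto simp: unique_mode_def)
  qed
  then obtain r where "r < n" "idf r = 1" using surj by blast
  then show ?thesis using False by (intro exI[of _ r]) (auto simp: allowed_move_def tie_move_def)
qed

section \<open>Convergence\<close>

lemma exec_active_allowed_move:
  assumes "\<forall>i<n. A i = target (idf i)" "\<forall>i<n. c i \<noteq> 0" "i < n" "i \<in> S t"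
  shows "allowed_move (idf i) (config n (exec n A c p0 S t)) (exec n A c p0 S t i)
    (exec n A c p0 S (Suc t) i)"
proof -
  have "config n (exec n A c p0 S t) \<noteq> {#}" using n_pos by (cases n) (auto simp: config_def)
  then show ?thesis
    using assms target_allowed_move[of "c i" "config n (exec n A c p0 S t)"]
    by (simp add: Let_def observe_def)
qed

lemma exec_legal_step:
  assumes "\<forall>i<n. A i = target (idf i)" "\<forall>i<n. c i \<noteq> 0"
  shows "legal_step idf (exec n A c p0 S t) (exec n A c p0 S (Suc t))"
  using exec_active_allowed_move[OF assms] by (auto simp: legal_step_def Let_def)

lemma exec_forms_goal:
  assumes inj: "inj_on idf {..<n}" and surj: "\<forall>j<n. \<exists>i<n. idf i = j"
    and A: "\<forall>i<n. A i = target (idf i)" and c: "\<forall>i<n. c i \<noteq> 0" and fair: "fair n S"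
  shows "\<exists>t. goal_formed (config n (exec n A c p0 S t))"
proof (rule ccontr)
  define p where "p = exec n A c p0 S"
  assume "\<not> (\<exists>t. goal_formed (config n (exec n A c p0 S t)))"
  then have not_complete: "\<not> goal_formed (config n (p t))" for t by (simp add: p_def)
  have legal: "legal_step idf (p t) (p (Suc t))" for t
    unfolding p_def by (rule exec_legal_step[OF A c])
  have progress: "\<exists>s\<ge>t. (\<forall>i<n. p s i = p t i) \<and> \<not> (\<forall>i<n. p (Suc s) i = p s i)" for t
  proof -
    obtain r where r: "r < n" and enabled: "\<forall>y. allowed_move (idf r) (config n (p t)) (p t r) y \<longrightarrow> y \<noteq> p t r"
      using exists_enabled_robot[OF surj not_complete] by blast
    show ?thesis
    proof (rule fair_enabled_robot_moves[OF fair _ _ _ r])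
      show "p (Suc t) i = p t i" if "i \<notin> S t" for t i using that by (simp add: p_def Let_def)
      show "allowed_move (idf i) (config n (p t)) (p t i) (p (Suc t) i)" if "i < n" "i \<in> S t" for t i
        using exec_active_allowed_move[where A = A and c = c] A c that by (simp add: p_def)
      show "allowed_move (idf i) (config n q) (q i) y = allowed_move (idf i) (config n q') (q' i) y"
        if "i < n" "\<forall>j<n. q j = q' j" for q q' i y
        using that config_cong[of n q q'] by simp
      show "y \<noteq> p t r" if "allowed_move (idf r) (config n (p t)) (p t r) y" for y
        using enabled that by blast
    qed
  qed
  have "\<exists>t a. unique_mode (config n (p t)) a"
  proof (rule ccontr)
    assume "\<not> (\<exists>t a. unique_mode (config n (p t)) a)"
    then have "\<forall>i<n. p (Suc t) i = p t i" for t using step_no_mode[OF inj _ legal] by blast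
    with progress[of 0] show False by blast
  qed
  then obtain t0 a where mode: "unique_mode (config n (p t0)) a" by blast
  have modes: "unique_mode (config n (p t)) a" if "t0 \<le> t" for t
    using that
  proof (induction t rule: dec_induct)
    case (step t)
    then show ?case using step_unique_mode[OF inj _ not_complete not_complete legal] by blast
  qed (rule mode)
  have "\<exists>s\<ge>t. potential idf a (p (Suc s)) < potential idf a (p t)" if "t0 \<le> t" for t
  proof -
    obtain s where s: "t \<le> s" "\<forall>i<n. p s i = p t i" "\<not> (\<forall>i<n. p (Suc s) i = p s i)"
      using progress by blast
    have "t0 \<le> s" using that s(1) by simp
    then have "potential idf a (p (Suc s)) < potential idf a (p s)"
      using step_unique_mode[OF inj modes not_complete not_complete legal] s(3) by blast
    moreover have "potential idf a (p s) = potential idf a (p t)" using potential_cong s(2) by blast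
    ultimately show ?thesis using s(1) by auto
  qed
  then show False
    by (rule bounded_potential_cannot_always_decrease[where V = "\<lambda>t. potential idf a (p t)",
          OF potential_lower_bound])
qed

lemma goal_formed_similar:
  assumes "goal_formed P" "G = mset (map (\<lambda>i. g0 + z i) [0..<n])"
  shows "similar P G"
proof -
  obtain a w where aw: "w \<noteq> 0" "P = partial_goal m a w" using assms(1) by (auto simp: goal_formed_def)
  have "partial_goal m a w = mset (map (\<lambda>i. a + w * z i) [0..<n])"
    unfolding partial_goal_def
    by (intro arg_cong[where f=mset] map_cong) (auto simp: partial_goal_pos_def z_zero z_0 Suc_le_eq)
  also have "\<dots> = image_mset (\<lambda>g. w * g + (a - w * g0)) G"
    unfolding assms(2) mset_map[symmetric] map_map
    by (intro arg_cong[where f=mset] map_cong) (auto simp: algebra_simps)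
  finally show ?thesis unfolding similar_def using aw by blast
qed

lemma card_target_image: "card (target ` {..<n}) = n"
  using card_image[OF inj_on_subset[OF inj_target]] by simp

lemma assignment_target_image:
  assumes "assignment n (target ` {..<n}) A"
  obtains idf where "inj_on idf {..<n}" "\<forall>j<n. \<exists>i<n. idf i = j" "\<forall>i<n. A i = target (idf i)"
proof -
  have A: "A ` {..<n} = target ` {..<n}" using assms by (simp add: assignment_def)
  define idf where "idf i = inv_into {..<n} target (A i)" for i
  have A_idf: "A i = target (idf i)" if "i < n" for i
  proof -
    have "A i \<in> target ` {..<n}" using A that by blast
    then show ?thesis unfolding idf_def by (rule f_inv_into_f[symmetric])
  qed
  have "inj_on A {..<n}"
    by (rule eq_card_imp_inj_on) (use A card_target_image in auto)
  then have "inj_on idf {..<n}"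
    using A_idf by (metis inj_on_def lessThan_iff)
  moreover have "\<forall>j<n. \<exists>i<n. idf i = j"
  proof (intro allI impI)
    fix j assume "j < n"
    then obtain i where "i < n" "A i = target j" using A by (metis imageE imageI lessThan_iff)
    then show "\<exists>i<n. idf i = j" using A_idf inj_target by (metis injD)
  qed
  ultimately show ?thesis using that A_idf by blast
qed

theorem target_image_solves_pf:
  assumes "G = mset (map (\<lambda>i. g0 + z i) [0..<n])"
  shows "solves_pf n G (target ` {..<n})"
  unfolding solves_pf_def
proof (intro allI impI)
  fix A :: "nat \<Rightarrow> target_fun" and c :: "nat \<Rightarrow> complex" and p0 S
  assume "assignment n (target ` {..<n}) A" "\<forall>i<n. c i \<noteq> 0" "fair n S"
  then obtain t where "goal_formed (config n (exec n A c p0 S t))"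
    using assignment_target_image exec_forms_goal by metis
  then show "\<exists>t. similar (config n (exec n A c p0 S t)) G"
    using goal_formed_similar[OF _ assms] by blast
qed

end

text \<open>The enumeration lists a point g0 of maximal multiplicity once, then the points
  different from g0, then the remaining copies of g0.\<close>

lemma goal_enumeration_exists:
  assumes "size G = n" "1 \<le> n"
  obtains m z g0 where "goal_enumeration n m z" "G = mset (map (\<lambda>i. g0 + z i) [0..<n])"
proof -
  have fin: "finite (count G ` set_mset G)" by simp
  have "count G ` set_mset G \<noteq> {}" using assms by auto
  from Max_in[OF fin this] obtain g0 where g0: "g0 \<in># G" "count G g0 = Max (count G ` set_mset G)"
    by auto
  have max: "count G x \<le> count G g0" for x
    using Max_ge[OF fin] g0(2) by (cases "x \<in># G") (auto simp: not_in_iff)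
  define \<mu> where "\<mu> = count G g0"
  have "1 \<le> \<mu>" using g0(1) by (simp add: \<mu>_def Suc_le_eq)
  obtain rs where rs: "mset rs = filter_mset (\<lambda>x. x \<noteq> g0) G" using ex_mset by blast
  define gs where "gs = g0 # rs @ replicate (\<mu> - 1) g0"
  have "mset gs = G"
  proof (rule multiset_eqI)
    fix x
    show "count (mset gs) x = count G x"
      using rs \<open>1 \<le> \<mu>\<close> by (cases "x = g0") (auto simp: gs_def \<mu>_def)
  qed
  then have len: "length gs = n" "length gs = length rs + \<mu>"
    using assms(1) \<open>1 \<le> \<mu>\<close> by (auto simp: gs_def simp flip: size_mset)
  define m where "m = length rs + 1"
  define z where "z i = (if i < n then gs ! i - g0 else 0)" for i
  have map_z: "map (\<lambda>i. g0 + z i) [0..<n] = gs"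
    using len by (intro nth_equalityI) (auto simp: z_def)
  have "goal_enumeration n m z"
  proof
    show "1 \<le> m" "m \<le> n" using len \<open>1 \<le> \<mu>\<close> by (auto simp: m_def)
    show "z 0 = 0" using assms(2) by (simp add: z_def gs_def)
    show "z i \<noteq> 0" if "1 \<le> i" "i < m" for i
    proof -
      have "gs ! i = rs ! (i - 1)" using that by (cases i) (auto simp: gs_def m_def nth_append)
      moreover have "rs ! (i - 1) \<in># filter_mset (\<lambda>x. x \<noteq> g0) G"
        using that by (auto simp: m_def simp flip: rs)
      ultimately show ?thesis using that len \<open>1 \<le> \<mu>\<close> by (auto simp: z_def m_def)
    qed
    show "z i = 0" if "m \<le> i" for i
      using that len by (cases i) (auto simp: z_def gs_def m_def nth_append)
    show "card {i. i < n \<and> z i = \<zeta>} \<le> n - m + 1" if "\<zeta> \<noteq> 0" for \<zeta>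
    proof -
      have "map z [0..<n] = map (\<lambda>g. g - g0) (map (\<lambda>i. g0 + z i) [0..<n])" by simp
      then have "mset (map z [0..<n]) = image_mset (\<lambda>g. g - g0) G"
        using \<open>mset gs = G\<close> by (simp only: map_z mset_map)
      then have "card {i. i < n \<and> z i = \<zeta>} = count (image_mset (\<lambda>g. g - g0) G) ((\<lambda>g. g - g0) (\<zeta> + g0))"
        by (simp add: count_mset_map_upt[symmetric])
      also have "\<dots> = count G (\<zeta> + g0)" by (rule count_image_mset_inj) (auto simp: inj_def)
      also have "\<dots> \<le> n - m + 1" using max[of "\<zeta> + g0"] len \<open>1 \<le> \<mu>\<close> by (simp add: \<mu>_def m_def)
      finally show ?thesis .
    qed
  qed
  then show ?thesis using that map_z \<open>mset gs = G\<close> by blast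
qed

theorem pattern_formation_solvable:
  assumes "1 \<le> n" "size G = n"
  shows "\<exists>Phi. algorithm n Phi \<and> card Phi = n \<and> solves_pf n G Phi"
proof -
  obtain m z g0 where enum: "goal_enumeration n m z" and G: "G = mset (map (\<lambda>i. g0 + z i) [0..<n])"
    using goal_enumeration_exists assms by metis
  interpret goal_enumeration n m z by (rule enum)
  show ?thesis
    using target_image_solves_pf[OF G] card_target_image assms(1)
    by (intro exI[of _ "target ` {..<n}"]) (auto simp: algorithm_def)
qed

theorem theoremT3020:
  fixes n :: nat
  assumes "n \<ge> 1"
  shows "(\<forall>G. size G = n \<longrightarrow> (\<exists>Phi. algorithm n Phi \<and> card Phi = n \<and> solves_pf n G Phi))
       \<and> (n \<ge> 3 \<longrightarrow> (\<forall>G. is_regular_ngon n G \<longrightarrow>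
            (\<forall>Phi. algorithm n Phi \<and> card Phi < n \<longrightarrow> \<not> solves_pf n G Phi)))"
  using pattern_formation_solvable[OF assms] regular_ngon_unsolvable by blast

end
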